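(* Let $G$ be a threshold graph with binary string $b=0^{s_1}1^{t_1}\cdots0^{s_k}1^{t_k}$ (all $s_i,t_i\geq1$), and for each $i\in\{1,\ldots,k\}$ let $\sigma_i=\sum_{j=1}^i s_j$ and $\tau_i=\sum_{j=i}^k t_j$. Then \[ \max_{1\leq i\leq k}\left\{\frac{(\tau_i-1)+\sqrt{(\tau_i-1)^2+4\tau_i\sigma_i}}{2}\right\}\leq\lambda_{\max}(G) \] and \[ \lambda_{\min}(G)\leq\min_{1\leq i\leq k}\left\{\frac{(\tau_i-1)-\sqrt{(\tau_i-1)^2+4\tau_i\sigma_i}}{2}\right\}. \]
   Context: $\lambda_{\max}(G)$ and $\lambda_{\min}(G)$ denote the largest and smallest eigenvalues of the $(0,1)$-adjacency matrix of $G$. Threshold graphs from binary strings: given $b=b_1\cdots b_n\in\{0,1\}^n$ with $b_1=0$, start with a single vertex and for $j=2,\ldots,n$ add a new vertex adjacent to all previous vertices if $b_j=1$ and isolated if $b_j=0$; the result is $G(b)$, and $b$ is its binary string. $0^s$ (resp. $1^t$) denotes $s$ consecutive zeros (resp. $t$ consecutive ones). *)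

theory Defs
  imports Complex_Main "Jordan_Normal_Form.Char_Poly"
begin

text \<open>Threshold graph G(b) from a binary string b (False = 0, True = 1), vertices 0..n-1
  in order of addition: vertex j is adjacent to every earlier vertex i < j iff b_j = 1.
  Hence distinct vertices i, j are adjacent iff b at position max i j is 1.\<close>
definition threshold_adj :: "bool list \<Rightarrow> real mat" where
  "threshold_adj b = mat (length b) (length b)
     (\<lambda>(i, j). if i \<noteq> j \<and> b ! (max i j) then 1 else 0)"

definition block_string :: "nat list \<Rightarrow> nat list \<Rightarrow> bool list" where
  "block_string ss ts = concat (map (\<lambda>(s, t). replicate s False @ replicate t True) (zip ss ts))"

definition lambda_max :: "real mat \<Rightarrow> real" where
  "lambda_max A = Max {x. eigenvalue A x}"

definition lambda_min :: "real mat \<Rightarrow> real" where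
  "lambda_min A = Min {x. eigenvalue A x}"

end

theory Submission
  imports Defs "HOL-Analysis.Function_Topology" "Jordan_Normal_Form.Spectral_Radius"
begin

(* Fix i. The vertices of the first i zero-blocks (sigma_i of them) are pairwise non-adjacent,
   the vertices of the one-blocks i, ..., k (tau_i of them) form a clique, and every vertex of
   the first kind is adjacent to every vertex of the second kind. On the vector that is tau_i on
   the first set, theta on the second and 0 elsewhere, the adjacency quadratic form equals theta
   times the squared norm as soon as theta^2 - (tau_i - 1) theta - tau_i sigma_i = 0, i.e. for
   both displayed roots. The Rayleigh bounds lambda_min |x|^2 <= x^T A x <= lambda_max |x|^2 for
   the symmetric adjacency matrix A then give both inequalities. The Rayleigh bounds are proved
   by maximising x^T A x on the unit sphere: the first-order condition at a maximiser says that
   it is an eigenvector. *)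

section \<open>Rayleigh bounds for real symmetric matrices\<close>

(* Vectors are functions nat => real of which only the first n coordinates matter, so that the
   product topology on nat => real provides compactness of the unit sphere. *)
definition quad_form :: "real mat \<Rightarrow> (nat \<Rightarrow> real) \<Rightarrow> real" where
  "quad_form A x = (\<Sum>i<dim_row A. \<Sum>j<dim_row A. A $$ (i, j) * x i * x j)"

definition sum_squares :: "nat \<Rightarrow> (nat \<Rightarrow> real) \<Rightarrow> real" where
  "sum_squares n x = (\<Sum>i<n. (x i)\<^sup>2)"

lemma sum_squares_nonneg: "0 \<le> sum_squares n x"
  unfolding sum_squares_def by (simp add: sum_nonneg)

lemma quad_form_scale: "quad_form A (\<lambda>i. c * x i) = c\<^sup>2 * quad_form A x"
  unfolding quad_form_def by (simp add: sum_distrib_left power2_eq_square algebra_simps)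

lemma sum_squares_scale: "sum_squares n (\<lambda>i. c * x i) = c\<^sup>2 * sum_squares n x"
  unfolding sum_squares_def by (simp add: sum_distrib_left power_mult_distrib)

lemma continuous_on_coordinate [continuous_intros]: "continuous_on S (\<lambda>x::nat \<Rightarrow> real. x i)"
  by (rule continuous_on_subset[OF continuous_on_product_coordinates]) auto

lemma compact_unit_sphere_fun:
  "compact {x::nat \<Rightarrow> real. (\<forall>i\<ge>n. x i = 0) \<and> sum_squares n x = 1}"
proof -
  define K :: "(nat \<Rightarrow> real) set"
    where "K = Pi\<^sub>E UNIV (\<lambda>i. if i < n then {-1..1} else {0})"
  have "compactin (product_topology (\<lambda>_. euclidean) UNIV) K"
    unfolding K_def compactin_PiE by (auto simp: compact_Icc)
  then have "compact K"
    by (simp add: euclidean_product_topology)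
  moreover have "closed {x::nat \<Rightarrow> real. \<forall>i\<ge>n. x i = 0}"
  proof -
    have "{x::nat \<Rightarrow> real. \<forall>i\<ge>n. x i = 0} = (\<Inter>i\<in>{n..}. {x. x i = 0})"
      by auto
    then show ?thesis
      by (simp add: closed_INT closed_Collect_eq continuous_on_coordinate)
  qed
  moreover have "closed {x::nat \<Rightarrow> real. sum_squares n x = 1}"
    unfolding sum_squares_def by (intro closed_Collect_eq continuous_intros)
  moreover have "{x. (\<forall>i\<ge>n. x i = 0) \<and> sum_squares n x = 1} \<subseteq> K"
  proof
    fix x :: "nat \<Rightarrow> real"
    assume x: "x \<in> {x. (\<forall>i\<ge>n. x i = 0) \<and> sum_squares n x = 1}"
    have "\<bar>x i\<bar> \<le> 1" if "i < n" for i
    proof -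
      have "(x i)\<^sup>2 \<le> sum_squares n x"
        unfolding sum_squares_def by (rule member_le_sum) (use that in auto)
      with x show ?thesis
        by (simp add: abs_square_le_1)
    qed
    with x show "x \<in> K"
      unfolding K_def by (auto simp: PiE_def extensional_def abs_le_iff)
  qed
  ultimately have "compact (K \<inter> ({x. \<forall>i\<ge>n. x i = 0} \<inter> {x. sum_squares n x = 1}))"
    by (intro compact_Int_closed closed_Int)
  also have "K \<inter> ({x. \<forall>i\<ge>n. x i = 0} \<inter> {x. sum_squares n x = 1})
      = {x. (\<forall>i\<ge>n. x i = 0) \<and> sum_squares n x = 1}"
    using \<open>{x. (\<forall>i\<ge>n. x i = 0) \<and> sum_squares n x = 1} \<subseteq> K\<close> by auto
  finally show ?thesis .
qed

lemma quad_form_le_if_le_on_sphere: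
  assumes A: "A \<in> carrier_mat n n"
    and sphere: "\<And>y. (\<forall>i\<ge>n. y i = 0) \<Longrightarrow> sum_squares n y = 1 \<Longrightarrow> quad_form A y \<le> M"
  shows "quad_form A x \<le> M * sum_squares n x"
proof -
  define x' where "x' = (\<lambda>i. if i < n then x i else 0)"
  have Q: "quad_form A x' = quad_form A x" and N: "sum_squares n x' = sum_squares n x"
    using A unfolding quad_form_def sum_squares_def x'_def by (auto intro!: sum.cong)
  show ?thesis
  proof (cases "sum_squares n x = 0")
    case True
    then have "\<forall>i<n. x i = 0"
      unfolding sum_squares_def by (simp add: sum_nonneg_eq_0_iff)
    then have "quad_form A x = 0"
      using A unfolding quad_form_def by simp
    with True show ?thesis by simp
  next
    case False
    then have pos: "sum_squares n x > 0"
      using sum_squares_nonneg[of n x] by linarith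
    define y where "y = (\<lambda>i. (1 / sqrt (sum_squares n x)) * x' i)"
    have "sum_squares n y = 1"
      unfolding y_def sum_squares_scale N using pos by (simp add: power_divide)
    moreover have "\<forall>i\<ge>n. y i = 0"
      unfolding y_def x'_def by simp
    ultimately have "quad_form A y \<le> M"
      by (rule sphere[rotated])
    moreover have "quad_form A y = quad_form A x / sum_squares n x"
      unfolding y_def quad_form_scale Q using pos by (simp add: power_divide)
    ultimately show ?thesis
      using pos by (simp add: divide_le_eq mult.commute)
  qed
qed

lemma linear_coeff_zero_if_quadratic_nonneg:
  fixes a b :: real
  assumes "\<And>t. 0 \<le> a * t + b * t\<^sup>2"
  shows "a = 0"
proof (rule ccontr)
  assume "a \<noteq> 0"
  define c where "c = \<bar>b\<bar> + 1"
  have c: "c > 0" "c - b > 0"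
    unfolding c_def by auto
  have "(a * (- a / c) + b * (- a / c)\<^sup>2) * c\<^sup>2 = - a\<^sup>2 * (c - b)"
    using c by (simp add: field_simps power2_eq_square)
  moreover have "a\<^sup>2 * (c - b) > 0"
    using \<open>a \<noteq> 0\<close> c by simp
  ultimately have "(a * (- a / c) + b * (- a / c)\<^sup>2) * c\<^sup>2 < 0"
    by simp
  moreover have "0 \<le> (a * (- a / c) + b * (- a / c)\<^sup>2) * c\<^sup>2"
    using assms[of "- a / c"] by simp
  ultimately show False
    by simp
qed

lemma sum_lessThan_delta:
  fixes k n :: nat
  assumes "k < n"
  shows "(\<Sum>i<n. of_bool (i = k) * f i) = (f k :: real)"
    and "(\<Sum>i<n. f i * of_bool (i = k)) = (f k :: real)"
  using assms by (simp_all add: Int_insert_right)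

lemma quad_form_perturb:
  assumes A: "A \<in> carrier_mat n n" and sym: "transpose_mat A = A" and k: "k < n"
  shows "quad_form A (\<lambda>i. x i + t * of_bool (i = k))
    = quad_form A x + 2 * t * (A *\<^sub>v vec n x) $ k + t\<^sup>2 * A $$ (k, k)"
proof -
  let ?d = "\<lambda>i. of_bool (i = k) :: real"
  have Akj: "A $$ (j, k) = A $$ (k, j)" if "j < n" for j
    using A k that by (metis carrier_matD index_transpose_mat(1) sym)
  have row: "(A *\<^sub>v vec n x) $ k = (\<Sum>j<n. A $$ (k, j) * x j)"
    using A k by (simp add: scalar_prod_def row_def lessThan_atLeast0)
  have "quad_form A (\<lambda>i. x i + t * ?d i)
      = quad_form A x + t * (\<Sum>i<n. ?d i * (\<Sum>j<n. A $$ (i, j) * x j))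
        + t * (\<Sum>i<n. x i * (\<Sum>j<n. A $$ (i, j) * ?d j))
        + t\<^sup>2 * (\<Sum>i<n. ?d i * (\<Sum>j<n. A $$ (i, j) * ?d j))"
    using A unfolding quad_form_def
    by (simp add: algebra_simps power2_eq_square sum.distrib sum_distrib_left
        del: sum_mult_of_bool_eq sum_of_bool_mult_eq)
  also have "\<dots> = quad_form A x + t * (\<Sum>j<n. A $$ (k, j) * x j)
        + t * (\<Sum>i<n. x i * A $$ (i, k)) + t\<^sup>2 * A $$ (k, k)"
    using k by (simp add: sum_lessThan_delta)
  also have "(\<Sum>i<n. x i * A $$ (i, k)) = (\<Sum>j<n. A $$ (k, j) * x j)"
    by (simp add: Akj mult.commute)
  finally show ?thesis
    unfolding row by simp
qed

lemma sum_squares_perturb: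
  assumes "k < n"
  shows "sum_squares n (\<lambda>i. x i + t * of_bool (i = k)) = sum_squares n x + 2 * t * x k + t\<^sup>2"
proof -
  have "(x i + t * of_bool (i = k))\<^sup>2 = (x i)\<^sup>2 + 2 * t * (x i * of_bool (i = k)) + t\<^sup>2 * of_bool (i = k)"
    for i
    by (cases "i = k") (simp_all add: power2_sum power_mult_distrib)
  with assms show ?thesis
    unfolding sum_squares_def
    by (simp add: sum.distrib sum_distrib_left[symmetric] sum_lessThan_delta Int_insert_right
        del: sum_mult_of_bool_eq)
qed

lemma mult_mat_vec_eq_if_rayleigh_bound_attained:
  assumes A: "A \<in> carrier_mat n n" and sym: "transpose_mat A = A"
    and bound: "\<And>x. quad_form A x \<le> M * sum_squares n x"
    and attained: "quad_form A v = M * sum_squares n v"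
  shows "A *\<^sub>v vec n v = M \<cdot>\<^sub>v vec n v"
proof (rule eq_vecI)
  fix k
  assume "k < dim_vec (M \<cdot>\<^sub>v vec n v)"
  then have k: "k < n" by simp
  have "0 \<le> 2 * (M * v k - (A *\<^sub>v vec n v) $ k) * t + (M - A $$ (k, k)) * t\<^sup>2" for t
    using bound[of "\<lambda>i. v i + t * of_bool (i = k)"] attained
    unfolding quad_form_perturb[OF A sym k] sum_squares_perturb[OF k]
    by (simp add: algebra_simps)
  then have "2 * (M * v k - (A *\<^sub>v vec n v) $ k) = 0"
    by (rule linear_coeff_zero_if_quadratic_nonneg)
  with k show "(A *\<^sub>v vec n v) $ k = (M \<cdot>\<^sub>v vec n v) $ k"
    by simp
qed (use A in simp)

lemma rayleigh_max_eigenvalue: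
  assumes A: "A \<in> carrier_mat n n" and sym: "transpose_mat A = A" and n: "0 < n"
  shows "\<exists>M. eigenvalue A M \<and> (\<forall>x. quad_form A x \<le> M * sum_squares n x)"
proof -
  define S where "S = {x::nat \<Rightarrow> real. (\<forall>i\<ge>n. x i = 0) \<and> sum_squares n x = 1}"
  have "(\<lambda>i. of_bool (i = 0)) \<in> S"
    using n sum_squares_perturb[of 0 n "\<lambda>_. 0" 1]
    unfolding S_def by (simp add: sum_squares_def[of n "\<lambda>_. 0"])
  moreover have "compact S"
    unfolding S_def by (rule compact_unit_sphere_fun)
  moreover have "continuous_on S (quad_form A)"
    unfolding quad_form_def by (intro continuous_intros)
  ultimately obtain v where "v \<in> S" and v_max: "\<forall>y\<in>S. quad_form A y \<le> quad_form A v"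
    using continuous_attains_sup by blast
  then have v: "sum_squares n v = 1"
    unfolding S_def by simp
  define M where "M = quad_form A v"
  have bound: "quad_form A x \<le> M * sum_squares n x" for x
    using A v_max unfolding M_def S_def by (intro quad_form_le_if_le_on_sphere) auto
  have "A *\<^sub>v vec n v = M \<cdot>\<^sub>v vec n v"
    using A sym bound by (rule mult_mat_vec_eq_if_rayleigh_bound_attained) (simp add: M_def v)
  moreover have "vec n v \<noteq> 0\<^sub>v n"
  proof
    assume "vec n v = 0\<^sub>v n"
    then have "\<forall>i<n. v i = 0"
      by (metis index_vec index_zero_vec(1))
    then have "sum_squares n v = 0"
      unfolding sum_squares_def by simp
    with v show False by simp
  qed
  ultimately have "eigenvector A (vec n v) M"
    using A unfolding eigenvector_def by simp
  then have "eigenvalue A M"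
    unfolding eigenvalue_def by blast
  with bound show ?thesis by blast
qed

lemma eigenvalue_uminus_mat:
  assumes A: "A \<in> carrier_mat n n" and ev: "eigenvalue (- A) M"
  shows "eigenvalue A (- M)"
proof -
  from ev obtain u where u: "u \<in> carrier_vec n" "u \<noteq> 0\<^sub>v n" and Au: "- A *\<^sub>v u = M \<cdot>\<^sub>v u"
    using A unfolding eigenvalue_def eigenvector_def by auto
  have "A *\<^sub>v u = - (- A *\<^sub>v u)"
    using A u by simp
  also have "\<dots> = (- M) \<cdot>\<^sub>v u"
    unfolding Au by (rule eq_vecI) auto
  finally have "A *\<^sub>v u = (- M) \<cdot>\<^sub>v u" .
  with A u show ?thesis
    unfolding eigenvalue_def eigenvector_def by auto
qed

lemma rayleigh_min_eigenvalue:
  assumes A: "A \<in> carrier_mat n n" and sym: "transpose_mat A = A" and n: "0 < n"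
  shows "\<exists>m. eigenvalue A m \<and> (\<forall>x. m * sum_squares n x \<le> quad_form A x)"
proof -
  have quad_neg: "quad_form (- A) x = - quad_form A x" for x
    using A unfolding quad_form_def by (simp add: sum_negf)
  have "- A \<in> carrier_mat n n" "transpose_mat (- A) = - A"
    using A sym by (simp_all add: transpose_uminus)
  from rayleigh_max_eigenvalue[OF this n] obtain M
    where ev: "eigenvalue (- A) M" and bound: "\<forall>x. quad_form (- A) x \<le> M * sum_squares n x"
    by blast
  from A ev have "eigenvalue A (- M)"
    by (rule eigenvalue_uminus_mat)
  moreover have "- M * sum_squares n x \<le> quad_form A x" for x
    using bound quad_neg by (simp add: minus_le_iff)
  ultimately show ?thesis by blast
qed

lemma quad_form_le_lambda_max:
  assumes A: "A \<in> carrier_mat n n" and sym: "transpose_mat A = A"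
  shows "quad_form A x \<le> lambda_max A * sum_squares n x"
proof (cases "n = 0")
  case True
  with A show ?thesis
    unfolding quad_form_def sum_squares_def by simp
next
  case False
  then obtain M where "eigenvalue A M" and bound: "quad_form A x \<le> M * sum_squares n x"
    using rayleigh_max_eigenvalue[OF A sym] by blast
  then have "M \<le> lambda_max A"
    using card_finite_spectrum(1)[OF A] unfolding lambda_max_def spectrum_def by simp
  then have "M * sum_squares n x \<le> lambda_max A * sum_squares n x"
    by (rule mult_right_mono) (rule sum_squares_nonneg)
  with bound show ?thesis by linarith
qed

lemma lambda_min_le_quad_form:
  assumes A: "A \<in> carrier_mat n n" and sym: "transpose_mat A = A"
  shows "lambda_min A * sum_squares n x \<le> quad_form A x"
proof (cases "n = 0")
  case True
  with A show ?thesis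
    unfolding quad_form_def sum_squares_def by simp
next
  case False
  then obtain m where "eigenvalue A m" and bound: "m * sum_squares n x \<le> quad_form A x"
    using rayleigh_min_eigenvalue[OF A sym] by blast
  then have "lambda_min A \<le> m"
    using card_finite_spectrum(1)[OF A] unfolding lambda_min_def spectrum_def by simp
  then have "lambda_min A * sum_squares n x \<le> m * sum_squares n x"
    by (rule mult_right_mono) (rule sum_squares_nonneg)
  with bound show ?thesis by linarith
qed

section \<open>Threshold graphs with an independent set joined to a later clique\<close>

lemma threshold_adj_carrier: "threshold_adj b \<in> carrier_mat (length b) (length b)"
  unfolding threshold_adj_def by simp

lemma transpose_threshold_adj: "transpose_mat (threshold_adj b) = threshold_adj b"
  by (rule eq_matI) (auto simp: threshold_adj_def max.commute)

lemma threshold_adj_split_entry: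
  assumes S: "S \<subseteq> {..<length b}" and T: "T \<subseteq> {..<length b}"
    and S_less_T: "\<forall>p\<in>S. \<forall>q\<in>T. p < q" and b_S: "\<forall>p\<in>S. \<not> b ! p" and b_T: "\<forall>q\<in>T. b ! q"
    and p: "p \<in> S \<union> T" and q: "q \<in> S \<union> T"
  shows "threshold_adj b $$ (p, q) = of_bool (p \<noteq> q \<and> (p \<in> T \<or> q \<in> T))"
proof -
  have "max p q \<in> T \<longleftrightarrow> p \<in> T \<or> q \<in> T"
    using p q S_less_T by (force simp: max_def)
  moreover have "b ! max p q \<longleftrightarrow> max p q \<in> T"
    using p q b_S b_T by (auto simp: max_def)
  moreover have "p < length b" "q < length b"
    using p q S T by auto
  ultimately show ?thesis
    unfolding threshold_adj_def by auto
qed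

lemma quad_form_eq_sum_support:
  assumes A: "A \<in> carrier_mat n n" and U: "U \<subseteq> {..<n}" and x: "\<And>i. i \<notin> U \<Longrightarrow> x i = 0"
  shows "quad_form A x = (\<Sum>p\<in>U. \<Sum>q\<in>U. A $$ (p, q) * x p * x q)"
proof -
  have "quad_form A x = (\<Sum>p<n. \<Sum>q<n. A $$ (p, q) * x p * x q)"
    unfolding quad_form_def using A by simp
  also have "\<dots> = (\<Sum>p\<in>U. \<Sum>q<n. A $$ (p, q) * x p * x q)"
    using U x by (intro sum.mono_neutral_right) auto
  also have "\<dots> = (\<Sum>p\<in>U. \<Sum>q\<in>U. A $$ (p, q) * x p * x q)"
    using U x by (intro sum.cong refl sum.mono_neutral_right) auto
  finally show ?thesis .
qed

lemma sum_off_diagonal_const: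
  fixes c :: real
  assumes "finite T"
  shows "(\<Sum>p\<in>T. \<Sum>q\<in>T. of_bool (p \<noteq> q) * c) = real (card T) * (real (card T) - 1) * c"
proof -
  have "(\<Sum>q\<in>T. of_bool (p \<noteq> q) * c) = (real (card T) - 1) * c" if "p \<in> T" for p
  proof -
    have "(\<Sum>q\<in>T. of_bool (p \<noteq> q) * c) = (\<Sum>q\<in>T. c - of_bool (p = q) * c)"
      by (intro sum.cong) auto
    with assms that show ?thesis
      by (simp add: sum_subtractf Int_insert_right algebra_simps)
  qed
  then show ?thesis
    by simp
qed

lemma quad_form_threshold_adj_split:
  fixes a c :: real
  assumes S: "S \<subseteq> {..<length b}" and T: "T \<subseteq> {..<length b}"
    and S_less_T: "\<forall>p\<in>S. \<forall>q\<in>T. p < q" and b_S: "\<forall>p\<in>S. \<not> b ! p" and b_T: "\<forall>q\<in>T. b ! q"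
  defines "x \<equiv> \<lambda>p. if p \<in> S then a else if p \<in> T then c else 0"
  shows "quad_form (threshold_adj b) x
      = 2 * real (card S) * real (card T) * a * c + real (card T) * (real (card T) - 1) * c\<^sup>2"
proof -
  let ?\<delta> = "\<lambda>p q. of_bool (p \<noteq> q \<and> (p \<in> T \<or> q \<in> T)) :: real"
  have fin: "finite S" "finite T"
    using S T finite_subset by auto
  have disj: "S \<inter> T = {}"
    using S_less_T by auto
  have "quad_form (threshold_adj b) x = (\<Sum>p\<in>S \<union> T. \<Sum>q\<in>S \<union> T. threshold_adj b $$ (p, q) * x p * x q)"
    by (rule quad_form_eq_sum_support[OF threshold_adj_carrier]) (use S T in \<open>auto simp: x_def\<close>)
  also have "\<dots> = (\<Sum>p\<in>S \<union> T. \<Sum>q\<in>S \<union> T. ?\<delta> p q * x p * x q)"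
    using threshold_adj_split_entry[OF S T S_less_T b_S b_T] by (intro sum.cong) auto
  also have "\<dots> = (\<Sum>p\<in>S. \<Sum>q\<in>S. ?\<delta> p q * x p * x q) + (\<Sum>p\<in>S. \<Sum>q\<in>T. ?\<delta> p q * x p * x q)
      + (\<Sum>p\<in>T. \<Sum>q\<in>S. ?\<delta> p q * x p * x q) + (\<Sum>p\<in>T. \<Sum>q\<in>T. ?\<delta> p q * x p * x q)"
    by (simp only: sum.union_disjoint[OF fin disj] sum.distrib add.assoc)
  also have "(\<Sum>p\<in>S. \<Sum>q\<in>S. ?\<delta> p q * x p * x q) = 0"
    using disj by (intro sum.neutral ballI) auto
  also have "(\<Sum>p\<in>S. \<Sum>q\<in>T. ?\<delta> p q * x p * x q) = (\<Sum>p\<in>S. \<Sum>q\<in>T. a * c)"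
    using disj by (intro sum.cong refl) (auto simp: x_def)
  also have "(\<Sum>p\<in>T. \<Sum>q\<in>S. ?\<delta> p q * x p * x q) = (\<Sum>p\<in>T. \<Sum>q\<in>S. a * c)"
    using disj by (intro sum.cong refl) (auto simp: x_def)
  also have "(\<Sum>p\<in>T. \<Sum>q\<in>T. ?\<delta> p q * x p * x q) = (\<Sum>p\<in>T. \<Sum>q\<in>T. of_bool (p \<noteq> q) * c\<^sup>2)"
    using disj by (intro sum.cong refl) (auto simp: x_def power2_eq_square)
  finally show ?thesis
    using sum_off_diagonal_const[OF fin(2), of "c\<^sup>2"] by simp
qed

lemma sum_squares_split:
  fixes a c :: real
  assumes "S \<subseteq> {..<n}" and "T \<subseteq> {..<n}" and "S \<inter> T = {}"
  shows "sum_squares n (\<lambda>p. if p \<in> S then a else if p \<in> T then c else 0)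
      = real (card S) * a\<^sup>2 + real (card T) * c\<^sup>2"
proof -
  let ?x = "\<lambda>p. if p \<in> S then a else if p \<in> T then c else 0"
  have fin: "finite S" "finite T"
    using finite_subset[OF assms(1)] finite_subset[OF assms(2)] by auto
  have "sum_squares n ?x = (\<Sum>p\<in>S \<union> T. (?x p)\<^sup>2)"
    unfolding sum_squares_def by (rule sum.mono_neutral_right) (use assms in auto)
  also have "\<dots> = (\<Sum>p\<in>S. (?x p)\<^sup>2) + (\<Sum>p\<in>T. (?x p)\<^sup>2)"
    by (rule sum.union_disjoint[OF fin assms(3)])
  also have "(\<Sum>p\<in>T. (?x p)\<^sup>2) = (\<Sum>p\<in>T. c\<^sup>2)"
    using assms(3) by (intro sum.cong) auto
  finally show ?thesis
    by simp
qed

lemma threshold_adj_split_root_bounds: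
  assumes S: "S \<subseteq> {..<length b}" and T: "T \<subseteq> {..<length b}"
    and S_less_T: "\<forall>p\<in>S. \<forall>q\<in>T. p < q" and b_S: "\<forall>p\<in>S. \<not> b ! p" and b_T: "\<forall>q\<in>T. b ! q"
    and "S \<noteq> {}" and "T \<noteq> {}"
    and root: "\<theta>\<^sup>2 - (real (card T) - 1) * \<theta> - real (card T) * real (card S) = 0"
  shows "lambda_min (threshold_adj b) \<le> \<theta> \<and> \<theta> \<le> lambda_max (threshold_adj b)"
proof -
  define \<tau> where "\<tau> = real (card T)"
  define \<sigma> where "\<sigma> = real (card S)"
  define x where "x = (\<lambda>p. if p \<in> S then \<tau> else if p \<in> T then \<theta> else 0)"
  have "\<sigma> > 0" "\<tau> > 0"
    unfolding \<sigma>_def \<tau>_def using S T \<open>S \<noteq> {}\<close> \<open>T \<noteq> {}\<close> finite_subset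
    by (auto simp: card_gt_0_iff)
  have N: "sum_squares (length b) x = \<sigma> * \<tau>\<^sup>2 + \<tau> * \<theta>\<^sup>2"
    unfolding x_def \<sigma>_def \<tau>_def using S T S_less_T by (intro sum_squares_split) auto
  with \<open>\<sigma> > 0\<close> \<open>\<tau> > 0\<close> have N_pos: "sum_squares (length b) x > 0"
    by (simp add: add_pos_nonneg)
  have "quad_form (threshold_adj b) x = 2 * \<sigma> * \<tau> * \<tau> * \<theta> + \<tau> * (\<tau> - 1) * \<theta>\<^sup>2"
    unfolding x_def \<sigma>_def \<tau>_def by (rule quad_form_threshold_adj_split[OF S T S_less_T b_S b_T])
  also have "\<dots> = \<theta> * (\<sigma> * \<tau>\<^sup>2 + \<tau> * \<theta>\<^sup>2) - \<tau> * \<theta> * (\<theta>\<^sup>2 - (\<tau> - 1) * \<theta> - \<tau> * \<sigma>)"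
    by (simp add: algebra_simps power2_eq_square)
  finally have Q: "quad_form (threshold_adj b) x = \<theta> * sum_squares (length b) x"
    using root unfolding N \<sigma>_def \<tau>_def by simp
  have "lambda_min (threshold_adj b) * sum_squares (length b) x \<le> \<theta> * sum_squares (length b) x"
    using lambda_min_le_quad_form[OF threshold_adj_carrier[of b] transpose_threshold_adj, where x = x]
    by (simp only: Q)
  moreover have "\<theta> * sum_squares (length b) x \<le> lambda_max (threshold_adj b) * sum_squares (length b) x"
    using quad_form_le_lambda_max[OF threshold_adj_carrier[of b] transpose_threshold_adj, where x = x]
    by (simp only: Q)
  ultimately show ?thesis
    using N_pos by simp
qed

lemma threshold_adj_split_bounds:
  assumes S: "S \<subseteq> {..<length b}" and T: "T \<subseteq> {..<length b}"
    and S_less_T: "\<forall>p\<in>S. \<forall>q\<in>T. p < q" and b_S: "\<forall>p\<in>S. \<not> b ! p" and b_T: "\<forall>q\<in>T. b ! q"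
    and "S \<noteq> {}" and "T \<noteq> {}"
  defines "\<tau> \<equiv> real (card T)" and "\<sigma> \<equiv> real (card S)"
  shows "((\<tau> - 1) + sqrt ((\<tau> - 1)\<^sup>2 + 4 * \<tau> * \<sigma>)) / 2 \<le> lambda_max (threshold_adj b)"
    and "lambda_min (threshold_adj b) \<le> ((\<tau> - 1) - sqrt ((\<tau> - 1)\<^sup>2 + 4 * \<tau> * \<sigma>)) / 2"
proof -
  let ?D = "(\<tau> - 1)\<^sup>2 + 4 * \<tau> * \<sigma>"
  have bounds: "lambda_min (threshold_adj b) \<le> ((\<tau> - 1) + r) / 2 \<and> ((\<tau> - 1) + r) / 2 \<le> lambda_max (threshold_adj b)"
    if "r\<^sup>2 = ?D" for r
  proof (rule threshold_adj_split_root_bounds[OF S T S_less_T b_S b_T \<open>S \<noteq> {}\<close> \<open>T \<noteq> {}\<close>])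
    show "(((\<tau> - 1) + r) / 2)\<^sup>2 - (real (card T) - 1) * (((\<tau> - 1) + r) / 2) - real (card T) * real (card S) = 0"
      using that unfolding \<tau>_def \<sigma>_def by (simp add: field_simps power2_eq_square)
  qed
  have "?D \<ge> 0"
    unfolding \<tau>_def \<sigma>_def by simp
  then show "((\<tau> - 1) + sqrt ?D) / 2 \<le> lambda_max (threshold_adj b)"
    and "lambda_min (threshold_adj b) \<le> ((\<tau> - 1) - sqrt ?D) / 2"
    using bounds[of "sqrt ?D"] bounds[of "- sqrt ?D"] by simp_all
qed

lemma sum_list_take_eq_sum_nth:
  "i \<le> length xs \<Longrightarrow> sum_list (take i xs) = (\<Sum>j=1..i. xs ! (j - 1))"
  by (simp add: sum_list_sum_nth atLeast0LessThan sum.atLeast1_atMost_eq min_absorb2)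

lemma sum_list_drop_eq_sum_nth:
  "sum_list (drop m xs) = (\<Sum>j=Suc m..length xs. xs ! (j - 1))"
proof (cases "m \<le> length xs")
  case True
  have "(\<Sum>j=Suc m..length xs. xs ! (j - 1)) = (\<Sum>j=0 + Suc m..<(length xs - m) + Suc m. xs ! (j - 1))"
    using True by (simp add: atLeastLessThanSuc_atLeastAtMost)
  also have "\<dots> = (\<Sum>j=0..<length xs - m. xs ! (m + j))"
    by (subst sum.shift_bounds_nat_ivl) (simp add: add.commute)
  also have "\<dots> = sum_list (drop m xs)"
    by (simp add: sum_list_sum_nth)
  finally show ?thesis ..
qed simp

lemma card_prefix_positions:
  "card {p. p < length u \<and> P ((u @ w) ! p)} = length (filter P u)"
  by (simp add: length_filter_conv_card nth_append conj_commute cong: conj_cong)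

lemma card_suffix_positions:
  "card {p. length u \<le> p \<and> p < length (u @ w) \<and> P ((u @ w) ! p)} = length (filter P w)"
proof -
  have "{p. length u \<le> p \<and> p < length (u @ w) \<and> P ((u @ w) ! p)}
      = (+) (length u) ` {q. q < length w \<and> P (w ! q)}"
    apply (auto simp: nth_append image_iff)
    subgoal for p by (intro exI[of _ "p - length u"]) auto
    done
  then show ?thesis
    by (simp add: length_filter_conv_card card_image)
qed

lemma block_string_Cons:
  "block_string (s # ss) (t # ts) = replicate s False @ replicate t True @ block_string ss ts"
  by (simp add: block_string_def)

lemma block_string_append:
  "length ss = length ts \<Longrightarrow>
    block_string (ss @ ss') (ts @ ts') = block_string ss ts @ block_string ss' ts'"
  by (simp add: block_string_def)

lemma length_filter_block_string:
  assumes "length ss = length ts"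
  shows "length (filter Not (block_string ss ts)) = sum_list ss"
    and "length (filter (\<lambda>x. x) (block_string ss ts)) = sum_list ts"
  using assms by (induction ss ts rule: list_induct2) (auto simp: block_string_def)

lemma block_string_split_positions:
  assumes len: "length ss = k" "length ts = k" and i: "1 \<le> i" "i \<le> k"
  defines "b \<equiv> block_string ss ts"
  obtains S T where "S \<subseteq> {..<length b}" and "T \<subseteq> {..<length b}"
    and "\<forall>p\<in>S. \<forall>q\<in>T. p < q" and "\<forall>p\<in>S. \<not> b ! p" and "\<forall>q\<in>T. b ! q"
    and "card S = (\<Sum>j=1..i. ss ! (j - 1))" and "card T = (\<Sum>j=i..k. ts ! (j - 1))"
proof -
  define m where "m = i - 1"
  have m: "m < k" "i = Suc m"
    using i unfolding m_def by auto
  define u where "u = block_string (take m ss) (take m ts) @ replicate (ss ! m) False"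
  define w where "w = replicate (ts ! m) True @ block_string (drop (Suc m) ss) (drop (Suc m) ts)"
  have "b = block_string (take m ss @ ss ! m # drop (Suc m) ss) (take m ts @ ts ! m # drop (Suc m) ts)"
    unfolding b_def using m len by (simp add: id_take_nth_drop[symmetric])
  also have "\<dots> = u @ w"
    unfolding u_def w_def using m len by (simp add: block_string_append block_string_Cons)
  finally have b: "b = u @ w" .
  define S where "S = {p. p < length u \<and> \<not> b ! p}"
  define T where "T = {p. length u \<le> p \<and> p < length b \<and> b ! p}"
  show thesis
  proof (rule that[of S T])
    show "S \<subseteq> {..<length b}" "T \<subseteq> {..<length b}"
      unfolding S_def T_def b by auto
    show "\<forall>p\<in>S. \<forall>q\<in>T. p < q" "\<forall>p\<in>S. \<not> b ! p" "\<forall>q\<in>T. b ! q"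
      unfolding S_def T_def by auto
    have "card S = length (filter Not u)"
      unfolding S_def b by (rule card_prefix_positions)
    also have "\<dots> = sum_list (take i ss)"
      unfolding u_def using m len by (simp add: length_filter_block_string take_Suc_conv_app_nth)
    also have "\<dots> = (\<Sum>j=1..i. ss ! (j - 1))"
      using i len by (simp add: sum_list_take_eq_sum_nth)
    finally show "card S = (\<Sum>j=1..i. ss ! (j - 1))" .
    have "card T = length (filter (\<lambda>x. x) w)"
      unfolding T_def b by (rule card_suffix_positions)
    also have "\<dots> = sum_list (drop m ts)"
      unfolding w_def using m len by (simp add: length_filter_block_string Cons_nth_drop_Suc[symmetric])
    also have "\<dots> = (\<Sum>j=i..k. ts ! (j - 1))"
      using m len by (simp add: sum_list_drop_eq_sum_nth)
    finally show "card T = (\<Sum>j=i..k. ts ! (j - 1))" .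
  qed
qed

theorem theorem5p2:
  fixes ss ts :: "nat list" and k :: nat
  assumes "length ss = k" and "length ts = k" and "k \<ge> 1"
    and "\<forall>s\<in>set ss. s \<ge> 1" and "\<forall>t\<in>set ts. t \<ge> 1"
  defines "\<sigma> \<equiv> (\<lambda>i. real (\<Sum>j=1..i. ss ! (j - 1)))"
    and "\<tau> \<equiv> (\<lambda>i. real (\<Sum>j=i..k. ts ! (j - 1)))"
  shows "(Max ((\<lambda>i. ((\<tau> i - 1) + sqrt ((\<tau> i - 1)^2 + 4 * \<tau> i * \<sigma> i)) / 2) ` {1..k})
           \<le> lambda_max (threshold_adj (block_string ss ts))) \<and>
         (lambda_min (threshold_adj (block_string ss ts))
           \<le> Min ((\<lambda>i. ((\<tau> i - 1) - sqrt ((\<tau> i - 1)^2 + 4 * \<tau> i * \<sigma> i)) / 2) ` {1..k}))"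
proof -
  let ?A = "threshold_adj (block_string ss ts)"
  have bounds: "((\<tau> i - 1) + sqrt ((\<tau> i - 1)^2 + 4 * \<tau> i * \<sigma> i)) / 2 \<le> lambda_max ?A
      \<and> lambda_min ?A \<le> ((\<tau> i - 1) - sqrt ((\<tau> i - 1)^2 + 4 * \<tau> i * \<sigma> i)) / 2"
    if "i \<in> {1..k}" for i
  proof -
    from that have i: "1 \<le> i" "i \<le> k" by auto
    obtain S T where S: "S \<subseteq> {..<length (block_string ss ts)}"
      and T: "T \<subseteq> {..<length (block_string ss ts)}"
      and split: "\<forall>p\<in>S. \<forall>q\<in>T. p < q" "\<forall>p\<in>S. \<not> block_string ss ts ! p"
        "\<forall>q\<in>T. block_string ss ts ! q"
      and card_S: "card S = (\<Sum>j=1..i. ss ! (j - 1))" and card_T: "card T = (\<Sum>j=i..k. ts ! (j - 1))"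
      using block_string_split_positions[OF assms(1,2) i] by blast
    have "1 \<le> ss ! (i - 1)" "1 \<le> ts ! (i - 1)"
      using assms(1,2,4,5) i by auto
    moreover have "ss ! (i - 1) \<le> card S" "ts ! (i - 1) \<le> card T"
      unfolding card_S card_T using i by (auto intro!: member_le_sum[of i])
    ultimately have "S \<noteq> {}" "T \<noteq> {}"
      by auto
    with threshold_adj_split_bounds[OF S T split] show ?thesis
      unfolding \<sigma>_def \<tau>_def card_S card_T by simp
  qed
  show ?thesis
    using bounds assms(3) by (auto intro!: Max.boundedI Min.boundedI)
qed

end
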